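(* Let $1\le h,t\le n$, $\mathbf j=(j_k)\in\mathbb N^n_\vartriangle$ and $A=(a_{i,j})\in\Theta^\pm_\vartriangle(n)$. The following hold in $\mathcal S_\vartriangle(n,r)_{\mathbb Q}$ for every $r\ge0$: (1) $0[\mathbf e_t,r]\,A[\mathbf j,r]=A[\mathbf j+\mathbf e_t,r]+\big(\sum_{s\in\mathbb Z}a_{t,s}\big)A[\mathbf j,r]$; (2) for $\varepsilon\in\{1,-1\}$, $$E^\vartriangle_{h,h+\varepsilon}[\mathbf 0,r]\,A[\mathbf j,r]=\sum_{i\ne h,h+\varepsilon;\ a_{h+\varepsilon,i}\ge1}(a_{h,i}+1)(A+E^\vartriangle_{h,i}-E^\vartriangle_{h+\varepsilon,i})[\mathbf j,r]+\sum_{0\le i\le j_h}(-1)^i\binom{j_h}{i}(A-E^\vartriangle_{h+\varepsilon,h})[\mathbf j+(1-i)\mathbf e_h,r]+(a_{h,h+\varepsilon}+1)\sum_{0\le i\le j_{h+\varepsilon}}\binom{j_{h+\varepsilon}}{i}(A+E^\vartriangle_{h,h+\varepsilon})[\mathbf j-i\mathbf e_{h+\varepsilon},r];$$ (3) for $m\in\mathbb Z\setminus\{0\}$, $$E^\vartriangle_{h,h+mn}[\mathbf 0,r]\,A[\mathbf j,r]=\sum_{s\notin\{h,h-mn\};\ a_{h,s}\ge1}(a_{h,s+mn}+1)(A+E^\vartriangle_{h,s+mn}-E^\vartriangle_{h,s})[\mathbf j,r]+\sum_{0\le t\le j_h}(a_{h,h+mn}+1)\binom{j_h}{t}(A+E^\vartriangle_{h,h+mn})[\mathbf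 j-t\mathbf e_h,r]+\sum_{0\le t\le j_h}(-1)^t\binom{j_h}{t}(A-E^\vartriangle_{h,h-mn})[\mathbf j+(1-t)\mathbf e_h,r].$$
   Context: Fix $n\ge2$. $I_\vartriangle(n,r)$ is the set of integer sequences $\mathbf i=(i_k)_{k\in\mathbb Z}$ with $i_{k+r}=i_k+n$, identified with $\mathbb Z^r$ via $(i_1,\dots,i_r)$. $\Omega_{\mathbb Q}^{\otimes r}$ is the $\mathbb Q$-space with basis $\omega_{\mathbf i}$ ($\mathbf i\in I_\vartriangle(n,r)$). The affine symmetric group $\mathfrak S_{\vartriangle,r}$ (bijections $w:\mathbb Z\to\mathbb Z$ with $w(k+r)=w(k)+r$) acts on the right by $\omega_{\mathbf i}w=\omega_{\mathbf iw}$, $(\mathbf iw)_k=i_{w(k)}$, and $\mathcal S_\vartriangle(n,r)_{\mathbb Q}=\mathrm{End}_{\mathbb Q\mathfrak S_{\vartriangle,r}}(\Omega_{\mathbb Q}^{\otimes r})$ with composition as product. $\Theta_\vartriangle(n)$ is the set of matrices $A=(a_{k,l})_{k,l\in\mathbb Z}$ over $\mathbb N$ with $a_{k+n,l+n}=a_{k,l}$ and finitely many nonzero entries in each row; $\sigma(A)=\sum_{1\le k\le n,\,l\in\mathbb Z}a_{k,l}$; $\Theta_\vartriangle(n,r)=\{A\in\Theta_\vartriangle(n)\mid\sigma(A)=r\}$; $\Theta^\pm_\vartriangle(n)$ is the set of $A\in\Theta_\vartriangle(n)$ with zero diagonal. For $\mathbf i,\mathbf j\in I_\vartriangle(n,r)$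 let $M(\mathbf i,\mathbf j)=(a_{k,l})$, $a_{k,l}=|\{s\in\mathbb Z\mid i_s=k,\ j_s=l\}|$; for $A\in\Theta_\vartriangle(n,r)$, $[A]_1\in\mathcal S_\vartriangle(n,r)_{\mathbb Q}$ is the map $\omega_{\mathbf j}\mapsto\sum_{\mathbf i:\,M(\mathbf i,\mathbf j)=A}\omega_{\mathbf i}$; these form a basis. $\mathbb N^n_\vartriangle$ is the set of $n$-periodic sequences of nonnegative integers (indices read mod $n$), $\mathbf e_h$ the periodic unit vector, $\Lambda_\vartriangle(n,m)=\{\lambda\in\mathbb N^n_\vartriangle\mid\sum_{i=1}^n\lambda_i=m\}$, $\mathrm{diag}(\lambda)$ the diagonal matrix with entries $\lambda_i$, and $\lambda^{\mathbf j}=\prod_{i=1}^n\lambda_i^{j_i}$ with $0^0=1$. $E^\vartriangle_{i,j}$ is the matrix with $1$ at positions $(i+sn,j+sn)$, $s\in\mathbb Z$, and $0$ elsewhere. For $A\in\Theta^\pm_\vartriangle(n)$, $A[\mathbf j,r]=\sum_{\lambda\in\Lambda_\vartriangle(n,r-\sigma(A))}\lambda^{\mathbf j}[A+\mathrm{diag}(\lambda)]_1$ if $\sigma(A)\le r$ and $0$ otherwise; moreover $A[\mathbf j,r]:=0$ if some off-diagonal entry of $A$ is negative. $0$ denotes the zero matrix. *)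

theory Defs
  imports Complex_Main "HOL-Library.Function_Algebras"
begin

text \<open>Periodic integer matrices (entries indexed by int x int), n-periodic along the diagonal.
  Entries are allowed to be negative so that expressions like A - E can be formed.\<close>
type_synonym smat = "int \<Rightarrow> int \<Rightarrow> int"

text \<open>An element of the algebra S(n,r)_Q, given by its coefficient matrix w.r.t. the basis
  omega_i (i in Z^r, represented as int lists of length r): f i j is the coefficient of
  omega_i in the image of omega_j.\<close>
type_synonym selt = "int list \<Rightarrow> int list \<Rightarrow> rat"

definition periodic_mat :: "nat \<Rightarrow> smat \<Rightarrow> bool" where
  "periodic_mat n A \<longleftrightarrow> (\<forall>k l. A (k + int n) (l + int n) = A k l)"

definition Theta_pm :: "nat \<Rightarrow> smat set" where
  "Theta_pm n = {A. periodic_mat n A \<and> (\<forall>k l. 0 \<le> A k l) \<and> (\<forall>k. finite {l. A k l \<noteq> 0})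
                    \<and> (\<forall>k. A k k = 0)}"

definition NN_tri :: "nat \<Rightarrow> (int \<Rightarrow> int) set" where
  "NN_tri n = {j. (\<forall>k. j (k + int n) = j k) \<and> (\<forall>k. 0 \<le> j k)}"

definition sigma_mat :: "nat \<Rightarrow> smat \<Rightarrow> int" where
  "sigma_mat n A = (\<Sum>k\<in>{1..int n}. \<Sum>l\<in>{l. A k l \<noteq> 0}. A k l)"

definition Lambda_tri :: "nat \<Rightarrow> nat \<Rightarrow> (int \<Rightarrow> nat) set" where
  "Lambda_tri n m = {lam. (\<forall>k. lam (k + int n) = lam k) \<and> (\<Sum>i\<in>{1..int n}. lam i) = m}"

definition diag_tri :: "(int \<Rightarrow> nat) \<Rightarrow> smat" where
  "diag_tri lam = (\<lambda>k l. if k = l then int (lam k) else 0)"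

definition vpow :: "nat \<Rightarrow> (int \<Rightarrow> nat) \<Rightarrow> (int \<Rightarrow> int) \<Rightarrow> rat" where
  "vpow n lam j = (\<Prod>i\<in>{1..int n}. of_nat (lam i) ^ nat (j i))"

definition E_tri :: "nat \<Rightarrow> int \<Rightarrow> int \<Rightarrow> smat" where
  "E_tri n i j = (\<lambda>k l. if \<exists>s::int. k = i + s * int n \<and> l = j + s * int n then 1 else 0)"

definition unitv :: "nat \<Rightarrow> int \<Rightarrow> int \<Rightarrow> int" where
  "unitv n h = (\<lambda>k. if k mod int n = h mod int n then 1 else 0)"

text \<open>M(i,j) for i, j in Z^r (lists of length r), extended to sequences via
  i_{s+mr} = i_s + mn: a_{k,l} = |{s in Z. i_s = k, j_s = l}|.\<close>
definition Mmat :: "nat \<Rightarrow> int list \<Rightarrow> int list \<Rightarrow> int \<Rightarrow> int \<Rightarrow> nat" where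
  "Mmat n i j k l = card {s. s < length i \<and> (\<exists>m::int. i ! s + m * int n = k \<and> j ! s + m * int n = l)}"

text \<open>[B]_1 : omega_j |-> sum of omega_i over i with M(i,j) = B.\<close>
definition basis1 :: "nat \<Rightarrow> nat \<Rightarrow> smat \<Rightarrow> selt" where
  "basis1 n r B = (\<lambda>i j. if length i = r \<and> length j = r \<and> (\<forall>k l. int (Mmat n i j k l) = B k l)
                         then 1 else 0)"

definition sprod :: "nat \<Rightarrow> selt \<Rightarrow> selt \<Rightarrow> selt" where
  "sprod r f g = (\<lambda>i j. \<Sum>k\<in>{k. length k = r \<and> g k j \<noteq> 0}. f i k * g k j)"

definition ssc :: "rat \<Rightarrow> selt \<Rightarrow> selt" where
  "ssc c f = (\<lambda>i j. c * f i j)"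

definition Abr :: "nat \<Rightarrow> nat \<Rightarrow> smat \<Rightarrow> (int \<Rightarrow> int) \<Rightarrow> selt" where
  "Abr n r A j = (if (\<exists>k l. k \<noteq> l \<and> A k l < 0) then 0
     else if sigma_mat n A \<le> int r then
       (\<Sum>lam\<in>Lambda_tri n (nat (int r - sigma_mat n A)).
           ssc (vpow n lam j) (basis1 n r (A + diag_tri lam)))
     else 0)"

end

theory Submission
  imports Defs "HOL-Library.FuncSet"
begin

text \<open>
  All identities are checked entrywise, at a pair \<open>(x, y)\<close> of index sequences. The
  \<open>(x, y)\<close>-entry of \<open>B[j,r]\<close> is nonzero only if \<open>M(x,y)\<close> agrees with \<open>B\<close> off the diagonal, and it is
  then the product of the diagonal entries of \<open>M(x,y)\<close> raised to the powers \<open>j\<close>.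

  Left multiplication by \<open>0[e\<^sub>t,r]\<close> multiplies this entry by the number of positions of \<open>x\<close> in
  the residue class of \<open>t\<close>, i.e. by the \<open>t\<close>-th row sum of \<open>M(x,y)\<close>, whose off-diagonal part is the
  \<open>t\<close>-th row sum of \<open>B\<close>.

  Left multiplication by \<open>E\<^sub>h\<^sub>,\<^sub>k[0,r]\<close> sums over the ways of shifting one entry of \<open>x\<close> from the
  class of \<open>h\<close> to the class of \<open>k\<close>. Such a shift changes \<open>M(x,y)\<close> by \<open>-E\<^sub>h\<^sub>,\<^sub>l + E\<^sub>k\<^sub>,\<^sub>l\<close>, where \<open>l\<close>
  is the column of the shifted entry, so the product becomes a sum over row \<open>h\<close> of \<open>M(x,y)\<close>.
  Columns other than \<open>h, k\<close> give the first sum of the theorem. Column \<open>h\<close> (resp. \<open>k\<close>) changes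
  the diagonal entry \<open>d\<close> to \<open>d - 1\<close> (resp. \<open>d + 1\<close>), and expanding \<open>(d - 1)\<^bsup>j\<^sub>h\<^esup>\<close> and
  \<open>(d + 1)\<^bsup>j\<^sub>k\<^esup>\<close> binomially gives the two remaining sums. The case \<open>k = h + mn\<close> is the same
  computation, rewritten with the periodicity of \<open>A\<close>.
\<close>

section \<open>Periodicity and residues modulo n\<close>

lemma E_tri_eq: "E_tri n h k a b = (if a - b = h - k \<and> int n dvd (a - h) then 1 else 0)"
proof -
  have "(\<exists>s::int. a = h + s * int n \<and> b = k + s * int n) \<longleftrightarrow> (a - b = h - k \<and> int n dvd (a - h))"
    by (auto simp: dvd_def algebra_simps)
  then show ?thesis unfolding E_tri_def by simp
qed

lemma E_tri_diag_zero: "p \<noteq> q \<Longrightarrow> E_tri n p q t t = 0"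
  unfolding E_tri_eq by simp

lemma E_tri_offdiag_zero: "a \<noteq> b \<Longrightarrow> E_tri n p p a b = 0"
  unfolding E_tri_eq by simp

lemma E_tri_transpose: "E_tri n k h b a = E_tri n h k a b"
proof -
  have "b - a = k - h \<longleftrightarrow> a - b = h - k" by auto
  moreover have "a - b = h - k \<Longrightarrow> b - k = a - h" by simp
  ultimately show ?thesis unfolding E_tri_eq by metis
qed

lemma E_tri_shift: "E_tri n (p + c * int n) (q + c * int n) = E_tri n p q"
proof -
  have "int n dvd (a - (p + c * int n)) \<longleftrightarrow> int n dvd (a - p)" for a
    using dvd_add_right_iff[of "int n" "c * int n" "a - (p + c * int n)"] by (simp add: algebra_simps)
  then show ?thesis unfolding E_tri_eq by (simp add: fun_eq_iff)
qed

lemma periodic_shift: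
  assumes "\<And>k. f (k + int n) = f k"
  shows "f (k + c * int n) = f k"
proof (induction c rule: int_induct[where k=0])
  case (step1 c)
  then show ?case using assms[of "k + c * int n"] by (simp add: algebra_simps)
next
  case (step2 c)
  then show ?case using assms[of "k + (c - 1) * int n"] by (simp add: algebra_simps)
qed simp

lemma periodic_mat_shift:
  assumes "periodic_mat n A"
  shows "A (k + c * int n) (l + c * int n) = A k l"
proof -
  have "A (k + (d + int n)) (l + (d + int n)) = A (k + d) (l + d)" for d
    using assms unfolding periodic_mat_def by (metis add.assoc)
  then show ?thesis using periodic_shift[of "\<lambda>d. A (k + d) (l + d)" n 0 c] by simp
qed

lemma dvd_iff_eq_mod_rep:
  assumes "t \<in> {1..int n}"
  shows "int n dvd (t - k) \<longleftrightarrow> t = (k - 1) mod int n + 1"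
proof -
  have "(t - 1) mod int n = t - 1" using assms by simp
  then show ?thesis using mod_eq_dvd_iff[of "t - 1" "int n" "k - 1"] by auto
qed

lemma mod_rep_mem: "0 < n \<Longrightarrow> (k - 1) mod int n + 1 \<in> {1..int n}"
  by (simp add: pos_mod_bound pos_mod_sign add1_zle_eq)

lemma mod_rep_id: "t \<in> {1..int n} \<Longrightarrow> (t - 1) mod int n + 1 = t"
  by simp

lemma periodic_eq_mod_rep:
  assumes "\<And>k. f (k + int n) = f k"
  shows "f k = f ((k - 1) mod int n + 1)"
proof -
  have "(k - 1) mod int n + 1 = k + (- ((k - 1) div int n)) * int n"
    using div_mult_mod_eq[of "k - 1" "int n"] by (simp add: algebra_simps)
  then show ?thesis using periodic_shift[of f n k "- ((k - 1) div int n)", OF assms] by simp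
qed

lemma unitv_on_rep:
  assumes "q \<in> {1..int n}"
  shows "unitv n k q = (if q = (k - 1) mod int n + 1 then 1 else 0)"
  unfolding unitv_def mod_eq_dvd_iff dvd_iff_eq_mod_rep[OF assms] ..

lemma E_tri_diag_on_rep:
  assumes "t \<in> {1..int n}"
  shows "E_tri n p q t t = (if p = q \<and> t = (p - 1) mod int n + 1 then 1 else 0)"
  unfolding E_tri_eq dvd_iff_eq_mod_rep[OF assms] by auto

section \<open>The matrix of a pair of index sequences\<close>

lemma Mmat_eq_card:
  "Mmat n x y k l = card {s. s < length x \<and> x!s - y!s = k - l \<and> int n dvd (k - x!s)}"
proof -
  have "(\<exists>m::int. x!s + m * int n = k \<and> y!s + m * int n = l) \<longleftrightarrow>
        (x!s - y!s = k - l \<and> int n dvd (k - x!s))" for s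
    by (auto simp: dvd_def algebra_simps intro!: exI[where x="(k - x!s) div int n"])
  then show ?thesis unfolding Mmat_def by simp
qed

lemma Mmat_periodic: "Mmat n x y (k + int n) (l + int n) = Mmat n x y k l"
proof -
  have "int n dvd (k + int n - a) \<longleftrightarrow> int n dvd (k - a)" for a
    using dvd_add_left_iff[of "int n" "int n" "k - a"] by (simp add: algebra_simps)
  then show ?thesis unfolding Mmat_eq_card by simp
qed

lemma Mmat_swap: "length z = length x \<Longrightarrow> Mmat n x z a b = Mmat n z x b a"
proof -
  assume len: "length z = length x"
  have "x!s - z!s = a - b \<and> int n dvd (a - x!s) \<longleftrightarrow> z!s - x!s = b - a \<and> int n dvd (b - z!s)" for s
  proof -
    have "x!s - z!s = a - b \<longleftrightarrow> z!s - x!s = b - a" by auto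
    moreover have "x!s - z!s = a - b \<Longrightarrow> b - z!s = a - x!s" by simp
    ultimately show ?thesis by metis
  qed
  then show ?thesis unfolding Mmat_eq_card len by simp
qed

lemma Mmat_pos_at_position:
  assumes "s < length z"
  shows "0 < Mmat n z y (z!s) (y!s)"
proof -
  have "s \<in> {s'. s' < length z \<and> z!s' - y!s' = z!s - y!s \<and> int n dvd (z!s - z!s')}"
    using assms by simp
  then show ?thesis unfolding Mmat_eq_card by (auto simp: card_gt_0_iff)
qed

definition row_positions :: "nat \<Rightarrow> int list \<Rightarrow> int \<Rightarrow> nat set" where
  "row_positions n x k = {s. s < length x \<and> int n dvd (k - x!s)}"

lemma finite_row_positions [simp]: "finite (row_positions n x k)"
  unfolding row_positions_def by simp

lemma Mmat_eq_card_row_positions: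
  "Mmat n x y k l = card {s \<in> row_positions n x k. y!s - x!s + k = l}"
  unfolding Mmat_eq_card row_positions_def by (rule arg_cong[where f=card]) auto

lemma Mmat_support:
  "{l. Mmat n x y k l \<noteq> 0} = (\<lambda>s. y!s - x!s + k) ` row_positions n x k"
  unfolding Mmat_eq_card_row_positions by (auto simp: card_eq_0_iff)

lemma finite_Mmat_support [simp]: "finite {l. Mmat n x y k l \<noteq> 0}"
  unfolding Mmat_support by simp

lemma sum_row_positions_Mmat:
  "(\<Sum>s\<in>row_positions n x k. F (y!s - x!s + k))
    = (\<Sum>l\<in>{l. Mmat n x y k l \<noteq> 0}. of_nat (Mmat n x y k l) * F l)"
proof -
  have "(\<Sum>s\<in>row_positions n x k. F (y!s - x!s + k)) = (\<Sum>l\<in>(\<lambda>s. y!s - x!s + k) ` row_positions n x k.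
      \<Sum>s\<in>{s \<in> row_positions n x k. y!s - x!s + k = l}. F (y!s - x!s + k))"
    by (rule sum.image_gen) simp
  also have "\<dots> = (\<Sum>l\<in>{l. Mmat n x y k l \<noteq> 0}. of_nat (Mmat n x y k l) * F l)"
    unfolding Mmat_support unfolding Mmat_eq_card_row_positions by (intro sum.cong refl) simp
  finally show ?thesis .
qed

lemma Mmat_row_sum:
  "(\<Sum>l\<in>{l. Mmat n x y k l \<noteq> 0}. Mmat n x y k l) = card (row_positions n x k)"
  using sum_row_positions_Mmat[where F="\<lambda>_. 1::nat"] by simp

lemma Mmat_diag_self: "Mmat n x x k k = card (row_positions n x k)"
  unfolding Mmat_eq_card row_positions_def by simp

lemma sum_card_row_positions:
  assumes "0 < n"
  shows "(\<Sum>k\<in>{1..int n}. card (row_positions n x k)) = length x"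
proof -
  have "(\<Sum>k\<in>{1..int n}. card (row_positions n x k))
      = (\<Sum>k\<in>{1..int n}. \<Sum>s<length x. if int n dvd (k - x!s) then 1 else 0)"
    unfolding row_positions_def by (simp add: sum.If_cases Int_def)
  also have "\<dots> = (\<Sum>s<length x. \<Sum>k\<in>{1..int n}. if k = (x!s - 1) mod int n + 1 then 1 else 0)"
    by (subst sum.swap) (intro sum.cong refl, simp add: dvd_iff_eq_mod_rep)
  also have "\<dots> = length x" using mod_rep_mem[OF assms] by simp
  finally show ?thesis .
qed

lemma inj_on_list_update_shift:
  fixes c :: "'a::cancel_comm_monoid_add"
  assumes "c \<noteq> 0"
  shows "inj_on (\<lambda>s. x[s := x!s + c]) {..<length x}"
proof (rule inj_onI, rule ccontr)
  fix s1 s2 assume s1: "s1 \<in> {..<length x}" and eq: "x[s1 := x!s1 + c] = x[s2 := x!s2 + c]" and "s1 \<noteq> s2"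
  have "x!s1 + c = x[s1 := x!s1 + c] ! s1" using s1 by simp
  also have "\<dots> = x[s2 := x!s2 + c] ! s1" by (simp only: eq)
  also have "\<dots> = x!s1" using \<open>s1 \<noteq> s2\<close> by simp
  finally show False using assms by simp
qed

definition Mmat_int :: "nat \<Rightarrow> int list \<Rightarrow> int list \<Rightarrow> smat" where
  "Mmat_int n x y = (\<lambda>k l. int (Mmat n x y k l))"

lemma Mmat_int_update:
  assumes s0: "s0 < length x" "int n dvd (h - x!s0)"
  shows "Mmat_int n (x[s0 := x!s0 + (k - h)]) y
    = Mmat_int n x y - E_tri n h (y!s0 - x!s0 + h) + E_tri n k (y!s0 - x!s0 + h)"
proof (intro ext)
  fix a b
  define z where "z = x[s0 := x!s0 + (k - h)]"
  define P where "P w = {s. s < length x \<and> w!s - y!s = a - b \<and> int n dvd (a - w!s)}" for w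
  have same: "P z - {s0} = P x - {s0}" unfolding P_def z_def by auto
  have dvd_shift: "int n dvd (a - (c + x!s0)) \<longleftrightarrow> int n dvd (a - (c + h))" for c
    using dvd_add_right_iff[OF s0(2), of "a - (c + h)"] by (simp add: algebra_simps)
  have fin: "finite (P w)" for w unfolding P_def by simp
  have card_P: "int (card (P w)) = int (card (P w - {s0})) + (if s0 \<in> P w then 1 else 0)" for w
  proof (cases "s0 \<in> P w")
    case True
    then show ?thesis using card.remove[OF fin True] by simp
  qed simp
  have "s0 \<in> P x \<longleftrightarrow> E_tri n h (y!s0 - x!s0 + h) a b = 1"
    using s0(1) dvd_shift[of 0] unfolding P_def E_tri_eq by auto
  moreover have "s0 \<in> P z \<longleftrightarrow> E_tri n k (y!s0 - x!s0 + h) a b = 1"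
    using s0(1) dvd_shift[of "k - h"] unfolding P_def E_tri_eq z_def by (auto simp: algebra_simps)
  moreover have "E_tri n p q a b = 0 \<or> E_tri n p q a b = 1" for p q unfolding E_tri_eq by simp
  ultimately have "int (card (P z))
      = int (card (P x)) - E_tri n h (y!s0 - x!s0 + h) a b + E_tri n k (y!s0 - x!s0 + h) a b"
    using card_P[of x] card_P[of z] same by (smt (verit))
  then show "Mmat_int n z y a b
      = (Mmat_int n x y - E_tri n h (y!s0 - x!s0 + h) + E_tri n k (y!s0 - x!s0 + h)) a b"
    unfolding Mmat_int_def Mmat_eq_card P_def z_def by simp
qed

section \<open>Entries of A[j,r]\<close>

lemma sum_fun_apply: "(sum f A) x = (\<Sum>i\<in>A. f i x)"
  by (induction A rule: infinite_finite_induct) auto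

lemma ssc_sum: "ssc c (\<Sum>i\<in>I. f i) = (\<Sum>i\<in>I. ssc c (f i))"
  by (simp add: ssc_def fun_eq_iff sum_fun_apply sum_distrib_left)

lemma ssc_ssc: "ssc c (ssc d f) = ssc (c * d) f"
  by (simp add: ssc_def fun_eq_iff)

definition agree_offdiag :: "smat \<Rightarrow> smat \<Rightarrow> bool" where
  "agree_offdiag C B \<longleftrightarrow> (\<forall>a b. a \<noteq> b \<longrightarrow> C a b = B a b)"

definition diag_pow :: "nat \<Rightarrow> smat \<Rightarrow> (int \<Rightarrow> int) \<Rightarrow> rat" where
  "diag_pow n C j = (\<Prod>t\<in>{1..int n}. of_int (C t t) ^ nat (j t))"

text \<open>The coefficient of a basis element \<open>[C]\<^sub>1\<close> in \<open>B[j,r]\<close>.\<close>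
definition Abr_coeff :: "nat \<Rightarrow> smat \<Rightarrow> (int \<Rightarrow> int) \<Rightarrow> smat \<Rightarrow> rat" where
  "Abr_coeff n B j C = (if agree_offdiag C B then diag_pow n C j else 0)"

definition Theta_int :: "nat \<Rightarrow> smat set" where
  "Theta_int n = {B. periodic_mat n B \<and> (\<forall>k. B k k = 0) \<and> (\<forall>k. finite {l. B k l \<noteq> 0})}"

lemma Theta_pm_subset_Theta_int: "Theta_pm n \<subseteq> Theta_int n"
  unfolding Theta_pm_def Theta_int_def by auto

lemma agree_offdiag_move:
  "agree_offdiag (C - D + D') B \<longleftrightarrow> agree_offdiag C (B + D - D')"
  unfolding agree_offdiag_def by (auto simp: algebra_simps)

lemma diag_pow_split:
  assumes "t \<in> {1..int n}"
  shows "diag_pow n C j = of_int (C t t) ^ nat (j t) * (\<Prod>q\<in>{1..int n} - {t}. of_int (C q q) ^ nat (j q))"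
  unfolding diag_pow_def by (rule prod.remove[OF _ assms]) simp

lemma diag_pow_shift_unitv:
  assumes "0 < n" and tk: "tk = (k - 1) mod int n + 1"
  shows "diag_pow n C (\<lambda>q. j q + c * unitv n k q)
    = of_int (C tk tk) ^ nat (j tk + c) * (\<Prod>q\<in>{1..int n} - {tk}. of_int (C q q) ^ nat (j q))"
proof -
  have tk_mem: "tk \<in> {1..int n}" using mod_rep_mem[OF assms(1)] tk by simp
  have "diag_pow n C (\<lambda>q. j q + c * unitv n k q)
      = of_int (C tk tk) ^ nat (j tk + c * unitv n k tk)
        * (\<Prod>q\<in>{1..int n} - {tk}. of_int (C q q) ^ nat (j q + c * unitv n k q))"
    unfolding diag_pow_def by (rule prod.remove[OF _ tk_mem]) simp
  also have "(\<Prod>q\<in>{1..int n} - {tk}. of_int (C q q) ^ nat (j q + c * unitv n k q))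
      = (\<Prod>q\<in>{1..int n} - {tk}. of_int (C q q) ^ nat (j q))"
    by (rule prod.cong) (auto simp: unitv_on_rep tk)
  finally show ?thesis using unitv_on_rep[OF tk_mem] tk by simp
qed

lemma row_sum_agree_offdiag:
  assumes "B k k = 0" and "agree_offdiag (Mmat_int n x y) B"
  shows "(\<Sum>l\<in>{l. B k l \<noteq> 0}. B k l) = int (card (row_positions n x k)) - int (Mmat n x y k k)"
proof -
  define S where "S = {l. Mmat n x y k l \<noteq> 0}"
  have B: "l \<noteq> k \<Longrightarrow> B k l = int (Mmat n x y k l)" for l
    using assms(2) unfolding agree_offdiag_def Mmat_int_def by simp
  have "{l. B k l \<noteq> 0} = S - {k}"
  proof (intro set_eqI)
    fix l show "l \<in> {l. B k l \<noteq> 0} \<longleftrightarrow> l \<in> S - {k}"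
      using assms(1) B[of l] unfolding S_def by (cases "l = k") auto
  qed
  then have "(\<Sum>l\<in>{l. B k l \<noteq> 0}. B k l) = (\<Sum>l\<in>S - {k}. int (Mmat n x y k l))"
    using B by (intro sum.cong) auto
  also have "\<dots> = int (\<Sum>l\<in>S. Mmat n x y k l) - int (Mmat n x y k k)"
    using sum_diff1[OF finite_Mmat_support, of "\<lambda>l. int (Mmat n x y k l)" n x y k k]
    unfolding S_def by (auto simp: of_nat_sum)
  finally show ?thesis unfolding S_def Mmat_row_sum .
qed

lemma sigma_mat_agree_offdiag:
  assumes "0 < n" and "\<forall>k. B k k = 0" and "agree_offdiag (Mmat_int n x y) B"
  shows "sigma_mat n B = int (length x) - (\<Sum>t\<in>{1..int n}. int (Mmat n x y t t))"
  using sum_card_row_positions[OF assms(1), of x] assms(2,3)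
  by (simp add: sigma_mat_def row_sum_agree_offdiag sum_subtractf flip: of_nat_sum)

lemma finite_Lambda_tri:
  assumes "0 < n"
  shows "finite (Lambda_tri n m)"
proof -
  have "inj_on (\<lambda>lam. restrict lam {1..int n}) (Lambda_tri n m)"
  proof (rule inj_onI, rule ext)
    fix l1 l2 k
    assume "l1 \<in> Lambda_tri n m" "l2 \<in> Lambda_tri n m"
      and eq: "restrict l1 {1..int n} = restrict l2 {1..int n}"
    then have "l1 k = l1 ((k - 1) mod int n + 1)" "l2 k = l2 ((k - 1) mod int n + 1)"
      unfolding Lambda_tri_def by (auto intro: periodic_eq_mod_rep)
    then show "l1 k = l2 k"
      using fun_cong[OF eq, of "(k - 1) mod int n + 1"] mod_rep_mem[OF assms] by simp
  qed
  moreover have "(\<lambda>lam. restrict lam {1..int n}) ` Lambda_tri n m \<subseteq> PiE {1..int n} (\<lambda>_. {0..m})"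
  proof (rule image_subsetI)
    fix lam assume "lam \<in> Lambda_tri n m"
    then have "lam i \<le> m" if "i \<in> {1..int n}" for i
      using member_le_sum[OF that, of lam] unfolding Lambda_tri_def by simp
    then show "restrict lam {1..int n} \<in> PiE {1..int n} (\<lambda>_. {0..m})" by auto
  qed
  then have "finite ((\<lambda>lam. restrict lam {1..int n}) ` Lambda_tri n m)"
    by (rule finite_subset) (simp add: finite_PiE)
  ultimately show ?thesis by (rule finite_imageD[rotated])
qed

lemma basis1_diag_apply:
  assumes "\<forall>k. B k k = 0"
  shows "basis1 n r (B + diag_tri lam) x y =
    (if length x = r \<and> length y = r \<and> agree_offdiag (Mmat_int n x y) B \<and> lam = (\<lambda>k. Mmat n x y k k)
     then 1 else 0)"
proof -
  have "(\<forall>k l. int (Mmat n x y k l) = B k l + diag_tri lam k l) \<longleftrightarrow>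
        agree_offdiag (Mmat_int n x y) B \<and> lam = (\<lambda>k. Mmat n x y k k)"
    using assms unfolding agree_offdiag_def Mmat_int_def diag_tri_def by (auto simp: fun_eq_iff)
  then show ?thesis unfolding basis1_def by simp
qed

lemma Abr_apply:
  assumes "0 < n" and "\<forall>k. B k k = 0"
  shows "Abr n r B j x y =
    (if length x = r \<and> length y = r then Abr_coeff n B j (Mmat_int n x y) else 0)"
proof -
  define lam0 where "lam0 = (\<lambda>k. Mmat n x y k k)"
  define m where "m = nat (int r - sigma_mat n B)"
  have Abr: "Abr n r B j x y = (if \<exists>k l. k \<noteq> l \<and> B k l < 0 then 0 else if sigma_mat n B \<le> int r
      then \<Sum>lam\<in>Lambda_tri n m. vpow n lam j * basis1 n r (B + diag_tri lam) x y else 0)"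
    unfolding Abr_def m_def by (auto simp: sum_fun_apply ssc_def)
  show ?thesis
  proof (cases "length x = r \<and> length y = r \<and> agree_offdiag (Mmat_int n x y) B")
    case True
    then have nonneg: "\<not> (\<exists>k l. k \<noteq> l \<and> B k l < 0)"
      unfolding agree_offdiag_def Mmat_int_def by (metis of_nat_0_le_iff not_le)
    moreover have sigma: "sigma_mat n B = int r - (\<Sum>t\<in>{1..int n}. int (lam0 t))"
      using sigma_mat_agree_offdiag[of n B x y, OF assms] True unfolding lam0_def by simp
    moreover have "lam0 \<in> Lambda_tri n m"
      using sigma unfolding Lambda_tri_def m_def lam0_def by (simp add: Mmat_periodic flip: of_nat_sum)
    ultimately have "Abr n r B j x y = vpow n lam0 j"
      using True unfolding Abr if_not_P[OF nonneg]
      by (simp add: basis1_diag_apply assms(2) finite_Lambda_tri[OF assms(1)] sum_nonneg lam0_def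
          if_distrib[of "\<lambda>c. vpow n _ j * c"] cong: if_cong del: not_le)
    then show ?thesis
      using True unfolding Abr_coeff_def vpow_def diag_pow_def lam0_def Mmat_int_def by simp
  next
    case False
    then show ?thesis
      unfolding Abr by (auto simp: basis1_diag_apply assms(2) Abr_coeff_def)
  qed
qed

lemma finite_Abr_support:
  assumes "0 < n" and B: "B \<in> Theta_int n"
  shows "finite {z. length z = r \<and> Abr n r B j z y \<noteq> 0}"
proof -
  define D where "D = insert 0 (\<Union>a\<in>{1..int n}. (\<lambda>b. a - b) ` {b. B a b \<noteq> 0})"
  define W where "W = (\<Union>s<length y. (\<lambda>d. y!s + d) ` D)"
  have "finite D" using B unfolding D_def Theta_int_def by auto
  then have "finite W" unfolding W_def by auto
  have diff_in_D: "z!s - y!s \<in> D" if agree: "agree_offdiag (Mmat_int n z y) B" and s: "s < length z"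
    for z s
  proof (cases "z!s = y!s")
    case False
    define c where "c = (z!s - 1) div int n"
    define a where "a = (z!s - 1) mod int n + 1"
    have za: "z!s = a + c * int n"
      unfolding a_def c_def using div_mult_mod_eq[of "z!s - 1" "int n"] by (simp add: algebra_simps)
    have "B (z!s) (y!s) = int (Mmat n z y (z!s) (y!s))"
      using agree False unfolding agree_offdiag_def Mmat_int_def by simp
    then have "B (z!s) (y!s) \<noteq> 0" using Mmat_pos_at_position[OF s, of n y] by simp
    then have "B a (y!s - c * int n) \<noteq> 0"
      using periodic_mat_shift[of n B a c "y!s - c * int n"] B za unfolding Theta_int_def by simp
    moreover have "z!s - y!s = a - (y!s - c * int n)" using za by simp
    ultimately show ?thesis
      unfolding D_def using mod_rep_mem[OF assms(1), of "z!s"] a_def by blast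
  qed (simp add: D_def)
  have "{z. length z = r \<and> Abr n r B j z y \<noteq> 0} \<subseteq> {z. set z \<subseteq> W \<and> length z = r}"
  proof (rule subsetI)
    fix z assume "z \<in> {z. length z = r \<and> Abr n r B j z y \<noteq> 0}"
    then have lz: "length z = r" and "length y = r" and agree: "agree_offdiag (Mmat_int n z y) B"
      using Abr_apply[OF assms(1)] B unfolding Theta_int_def Abr_coeff_def
      by (auto split: if_splits)
    have "z!s \<in> W" if "s < length z" for s
      using diff_in_D[OF agree that] that lz \<open>length y = r\<close> unfolding W_def
      by (auto intro!: bexI[of _ s] image_eqI[of _ _ "z!s - y!s"])
    then show "z \<in> {z. set z \<subseteq> W \<and> length z = r}" using lz by (auto simp: in_set_conv_nth)
  qed
  then show ?thesis using finite_lists_length_eq[OF \<open>finite W\<close>, of r] by (rule finite_subset)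
qed

lemma sprod_Abr_outside:
  assumes "0 < n" and "\<forall>a. B a a = 0" and "\<forall>a. B' a a = 0" and "\<not> (length x = r \<and> length y = r)"
  shows "sprod r (Abr n r B i) (Abr n r B' j) x y = 0"
  unfolding sprod_def using assms
  by (intro sum.neutral) (auto simp: Abr_apply[of n B] Abr_apply[of n B'])

section \<open>Multiplication by 0[e_t,r]\<close>

lemma agree_offdiag_zero_iff:
  assumes "length z = length x"
  shows "agree_offdiag (Mmat_int n x z) 0 \<longleftrightarrow> z = x"
proof
  assume agree: "agree_offdiag (Mmat_int n x z) 0"
  show "z = x"
  proof (rule nth_equalityI)
    fix s assume "s < length z"
    then show "z!s = x!s"
      using agree Mmat_pos_at_position[of s x n z] assms
      unfolding agree_offdiag_def Mmat_int_def by (metis less_irrefl of_nat_0 of_nat_eq_iff zero_fun_def)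
  qed (use assms in simp)
qed (simp add: agree_offdiag_def Mmat_int_def Mmat_eq_card)

lemma sprod_Abr_zero_apply:
  assumes "0 < n" and B: "B \<in> Theta_int n"
  shows "sprod r (Abr n r 0 i) (Abr n r B j) x y
    = (if length x = r then diag_pow n (Mmat_int n x x) i * Abr n r B j x y else 0)"
proof -
  have zero: "\<forall>k. (0::smat) k k = 0" by simp
  have left: "Abr n r 0 i x z = (if length x = r \<and> z = x then diag_pow n (Mmat_int n x x) i else 0)"
    if "length z = r" for z
    using Abr_apply[of n 0, OF assms(1) zero] agree_offdiag_zero_iff[of z x n] that
    by (auto simp: Abr_coeff_def)
  have "sprod r (Abr n r 0 i) (Abr n r B j) x y
      = (\<Sum>z\<in>{z. length z = r \<and> Abr n r B j z y \<noteq> 0}.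
           (if length x = r \<and> z = x then diag_pow n (Mmat_int n x x) i else 0) * Abr n r B j z y)"
    unfolding sprod_def by (rule sum.cong) (simp_all add: left)
  also have "\<dots> = (if length x = r then diag_pow n (Mmat_int n x x) i * Abr n r B j x y else 0)"
    using finite_Abr_support[OF assms, of r j y] by (auto simp: if_distrib[of "\<lambda>c. c * _"] sum.delta' cong: if_cong)
  finally show ?thesis .
qed

lemma sprod_Abr_zero_unitv:
  assumes "0 < n" and t: "t \<in> {1..int n}" and B: "B \<in> Theta_int n" and j: "j \<in> NN_tri n"
  shows "sprod r (Abr n r 0 (unitv n t)) (Abr n r B j)
    = Abr n r B (j + unitv n t) + ssc (of_int (\<Sum>s\<in>{s. B t s \<noteq> 0}. B t s)) (Abr n r B j)"
proof (intro ext)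
  fix x y
  have Bdiag: "\<forall>k. B k k = 0" using B unfolding Theta_int_def by simp
  have "0 \<le> j t" using j unfolding NN_tri_def by simp
  define P where "P = (\<Prod>q\<in>{1..int n} - {t}. of_int (Mmat_int n x y q q) ^ nat (j q) :: rat)"
  have diag_x: "diag_pow n (Mmat_int n x x) (unitv n t) = of_nat (card (row_positions n x t))"
    using diag_pow_shift_unitv[OF assms(1) mod_rep_id[OF t, symmetric], of "Mmat_int n x x" "\<lambda>_. 0" 1]
    by (simp add: Mmat_int_def Mmat_diag_self)
  have shifted: "diag_pow n (Mmat_int n x y) (j + unitv n t) = of_nat (Mmat n x y t t) ^ nat (j t + 1) * P"
    using diag_pow_shift_unitv[OF assms(1) mod_rep_id[OF t, symmetric], of "Mmat_int n x y" j 1]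
    by (simp add: P_def Mmat_int_def plus_fun_def)
  have unshifted: "diag_pow n (Mmat_int n x y) j = of_nat (Mmat n x y t t) ^ nat (j t) * P"
    using diag_pow_split[OF t] by (simp add: P_def Mmat_int_def)
  have "of_nat (card (row_positions n x t)) * diag_pow n (Mmat_int n x y) j
      = diag_pow n (Mmat_int n x y) (j + unitv n t) + of_int (\<Sum>s\<in>{s. B t s \<noteq> 0}. B t s) * diag_pow n (Mmat_int n x y) j"
    if "agree_offdiag (Mmat_int n x y) B"
  proof -
    have "int (card (row_positions n x t)) = int (Mmat n x y t t) + (\<Sum>s\<in>{s. B t s \<noteq> 0}. B t s)"
      using row_sum_agree_offdiag[of B t n x y] that Bdiag by simp
    then have "(of_nat (card (row_positions n x t)) :: rat)
        = of_nat (Mmat n x y t t) + of_int (\<Sum>s\<in>{s. B t s \<noteq> 0}. B t s)"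
      by (metis of_int_add of_int_of_nat_eq)
    then show ?thesis
      unfolding shifted unshifted using \<open>0 \<le> j t\<close> by (simp add: nat_add_distrib algebra_simps)
  qed
  then show "sprod r (Abr n r 0 (unitv n t)) (Abr n r B j) x y
      = (Abr n r B (j + unitv n t) + ssc (of_int (\<Sum>s\<in>{s. B t s \<noteq> 0}. B t s)) (Abr n r B j)) x y"
    unfolding sprod_Abr_zero_apply[OF assms(1) B] Abr_apply[of n B, OF assms(1) Bdiag] diag_x
    by (simp add: Abr_coeff_def ssc_def)
qed

section \<open>Multiplication by E_{h,k}[0,r]\<close>

lemma agree_offdiag_E_update:
  assumes "s \<in> row_positions n x h"
  shows "agree_offdiag (Mmat_int n x (x[s := x!s + (k - h)])) (E_tri n h k)"
proof -
  define z where "z = x[s := x!s + (k - h)]"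
  have s: "s < length x" "int n dvd (h - x!s)" using assms unfolding row_positions_def by auto
  have "int (Mmat n z x b a) = int (Mmat n x x b a) - E_tri n h h b a + E_tri n k h b a" for a b
    using fun_cong[OF fun_cong[OF Mmat_int_update[OF s, of k x]], of b a]
    unfolding z_def Mmat_int_def by simp
  moreover have "Mmat n x x b a = 0" "E_tri n h h b a = 0" if "a \<noteq> b" for a b
    using that unfolding Mmat_eq_card E_tri_eq by auto
  moreover have "length z = length x" unfolding z_def by simp
  ultimately show ?thesis
    using Mmat_swap E_tri_transpose unfolding agree_offdiag_def Mmat_int_def z_def by simp
qed

lemma agree_offdiag_E_imp_update:
  assumes hk: "h \<noteq> k" and len: "length z = length x"
    and agree: "agree_offdiag (Mmat_int n x z) (E_tri n h k)"
  shows "\<exists>s\<in>row_positions n x h. z = x[s := x!s + (k - h)]"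
proof -
  define T where "T = {s. s < length x \<and> x!s \<noteq> z!s}"
  have moved: "x!s - z!s = h - k \<and> int n dvd (h - x!s)" if "s \<in> T" for s
  proof -
    have "E_tri n h k (x!s) (z!s) = int (Mmat n x z (x!s) (z!s))"
      using agree that unfolding T_def agree_offdiag_def Mmat_int_def by simp
    then have "E_tri n h k (x!s) (z!s) \<noteq> 0"
      using Mmat_pos_at_position[of s x n z] that unfolding T_def by simp
    then show ?thesis using dvd_diff_commute[of "int n" "x!s" h] unfolding E_tri_eq by (simp split: if_splits)
  qed
  have "int (Mmat n x z h k) = 1" using agree hk unfolding agree_offdiag_def Mmat_int_def E_tri_eq by simp
  moreover have "{s. s < length x \<and> x!s - z!s = h - k \<and> int n dvd (h - x!s)} = T"
    using moved hk unfolding T_def by auto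
  ultimately have "card T = 1" unfolding Mmat_eq_card by simp
  then obtain s0 where T: "T = {s0}" by (rule card_1_singletonE)
  then have "s0 \<in> row_positions n x h" and z_s0: "z!s0 = x!s0 + (k - h)"
    using moved[of s0] unfolding T_def row_positions_def by auto
  moreover have "z = x[s0 := x!s0 + (k - h)]"
  proof (rule nth_equalityI)
    fix s assume s: "s < length z"
    show "z!s = x[s0 := x!s0 + (k - h)] ! s"
    proof (cases "s = s0")
      case False
      then have "s \<notin> T" using T by simp
      then show ?thesis using False s len unfolding T_def by simp
    qed (use z_s0 s len in simp)
  qed (use len in simp)
  ultimately show ?thesis by blast
qed

lemma agree_offdiag_E_iff:
  assumes "h \<noteq> k" and "length z = length x"
  shows "agree_offdiag (Mmat_int n x z) (E_tri n h k) \<longleftrightarrow>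
    (\<exists>s\<in>row_positions n x h. z = x[s := x!s + (k - h)])"
  using agree_offdiag_E_imp_update[OF assms] agree_offdiag_E_update by blast

lemma sprod_Abr_E_apply:
  assumes "0 < n" and hk: "h \<noteq> k" and B: "B \<in> Theta_int n" and len: "length x = r" "length y = r"
  shows "sprod r (Abr n r (E_tri n h k) 0) (Abr n r B j) x y
    = (\<Sum>l\<in>{l. Mmat_int n x y h l \<noteq> 0}.
         of_int (Mmat_int n x y h l) * Abr_coeff n B j (Mmat_int n x y - E_tri n h l + E_tri n k l))"
proof -
  define move where "move s = x[s := x!s + (k - h)]" for s
  define I where "I = move ` row_positions n x h"
  define Z where "Z = {z. length z = r \<and> Abr n r B j z y \<noteq> 0}"
  define F where "F l = Abr_coeff n B j (Mmat_int n x y - E_tri n h l + E_tri n k l)" for l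
  have Bdiag: "\<forall>a. B a a = 0" and Ediag: "\<forall>a. E_tri n h k a a = 0"
    using B hk unfolding Theta_int_def by (auto simp: E_tri_diag_zero)
  have lenI: "length z = r" if "z \<in> I" for z using that len unfolding I_def move_def by auto
  have left: "Abr n r (E_tri n h k) 0 x z = (if z \<in> I then 1 else 0)" if "length z = r" for z
    using Abr_apply[of n "E_tri n h k", OF assms(1) Ediag] agree_offdiag_E_iff[OF hk, of z x n] that len
    unfolding I_def move_def by (auto simp: Abr_coeff_def diag_pow_def)
  have "sprod r (Abr n r (E_tri n h k) 0) (Abr n r B j) x y
      = (\<Sum>z\<in>Z. if z \<in> I then Abr n r B j z y else 0)"
    unfolding sprod_def Z_def[symmetric] by (rule sum.cong) (auto simp: Z_def left)
  also have "\<dots> = (\<Sum>z\<in>Z \<inter> I. Abr n r B j z y)"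
    using finite_Abr_support[OF assms(1) B, of r j y] by (simp add: Z_def sum.inter_restrict)
  also have "\<dots> = (\<Sum>z\<in>I. Abr n r B j z y)"
    by (rule sum.mono_neutral_left) (auto simp: I_def Z_def lenI)
  also have "\<dots> = (\<Sum>s\<in>row_positions n x h. Abr n r B j (move s) y)"
    using inj_on_list_update_shift[of "k - h" x] hk unfolding I_def move_def
    by (intro sum.reindex[unfolded comp_def]) (auto intro: inj_on_subset simp: row_positions_def)
  also have "\<dots> = (\<Sum>s\<in>row_positions n x h. F (y!s - x!s + h))"
  proof (rule sum.cong[OF refl])
    fix s assume "s \<in> row_positions n x h"
    then have "s < length x" "int n dvd (h - x!s)" unfolding row_positions_def by auto
    then show "Abr n r B j (move s) y = F (y!s - x!s + h)"
      unfolding Abr_apply[of n B, OF assms(1) Bdiag] move_def F_def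
      using len by (simp add: Mmat_int_update)
  qed
  also have "\<dots> = (\<Sum>l\<in>{l. Mmat n x y h l \<noteq> 0}. of_nat (Mmat n x y h l) * F l)"
    by (rule sum_row_positions_Mmat)
  finally show ?thesis unfolding F_def Mmat_int_def by simp
qed

lemma sum_binomial_alternating_shift:
  "(\<Sum>i\<in>{0..J}. (-1) ^ i * of_nat (J choose i) * (d::'a::comm_ring_1) ^ (J + 1 - i)) = d * (d - 1) ^ J"
proof -
  have "d * (d - 1) ^ J = d * (\<Sum>i\<le>J. of_nat (J choose i) * (-1) ^ i * d ^ (J - i))"
    using binomial_ring[of "-1" d J] by simp
  also have "\<dots> = (\<Sum>i\<in>{0..J}. (-1) ^ i * of_nat (J choose i) * d ^ (J + 1 - i))"
    unfolding sum_distrib_left atLeast0AtMost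
    by (intro sum.cong refl) (simp add: Suc_diff_le power_Suc mult_ac)
  finally show ?thesis by (rule sym)
qed

lemma sum_binomial_pow:
  "(\<Sum>i\<in>{0..J}. of_nat (J choose i) * (d::'a::comm_ring_1) ^ (J - i)) = (d + 1) ^ J"
  using binomial_ring[of 1 d J] by (simp add: atLeast0AtMost add.commute)

lemma Abr_coeff_move_offdiag:
  assumes "l \<noteq> h" and "l \<noteq> k"
  shows "Abr_coeff n A j (C - E_tri n h l + E_tri n k l) = Abr_coeff n (A + E_tri n h l - E_tri n k l) j C"
  using assms unfolding Abr_coeff_def agree_offdiag_move diag_pow_def by (simp add: E_tri_diag_zero)

lemma Abr_coeff_move_source:
  assumes "0 < n" and h: "h \<in> {1..int n}" and "h \<noteq> k" and "0 \<le> j h"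
  shows "of_int (C h h) * Abr_coeff n A j (C - E_tri n h h + E_tri n k h)
    = (\<Sum>i\<in>{0..nat (j h)}. (-1) ^ i * of_nat (nat (j h) choose i)
        * Abr_coeff n (A - E_tri n k h) (j + (\<lambda>q. (1 - int i) * unitv n h q)) C)"
proof -
  define d where "d = (of_int (C h h) :: rat)"
  define P where "P = (\<Prod>q\<in>{1..int n} - {h}. of_int (C q q) ^ nat (j q) :: rat)"
  have agree: "agree_offdiag (C - E_tri n h h + E_tri n k h) A \<longleftrightarrow> agree_offdiag C (A - E_tri n k h)"
    unfolding agree_offdiag_move agree_offdiag_def by (auto simp: E_tri_offdiag_zero algebra_simps)
  have Ehh: "E_tri n h h q q = (if q = h then 1 else 0)" if "q \<in> {1..int n}" for q
    using E_tri_diag_on_rep[OF that] mod_rep_id[OF h] by simp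
  have "(\<Prod>q\<in>{1..int n} - {h}. of_int ((C - E_tri n h h + E_tri n k h) q q) ^ nat (j q)) = P"
    unfolding P_def using \<open>h \<noteq> k\<close> by (intro prod.cong) (auto simp: Ehh E_tri_diag_zero)
  then have "diag_pow n (C - E_tri n h h + E_tri n k h) j = (d - 1) ^ nat (j h) * P"
    using diag_pow_split[OF h] \<open>h \<noteq> k\<close> h by (simp add: d_def Ehh E_tri_diag_zero)
  moreover have "diag_pow n C (j + (\<lambda>q. (1 - int i) * unitv n h q)) = d ^ (nat (j h) + 1 - i) * P"
    if "i \<in> {0..nat (j h)}" for i
  proof -
    have "nat (j h + (1 - int i)) = nat (j h) + 1 - i" using that \<open>0 \<le> j h\<close> by auto
    then show ?thesis
      using diag_pow_shift_unitv[OF assms(1) mod_rep_id[OF h, symmetric], of C j "1 - int i"]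
      by (simp add: d_def P_def plus_fun_def)
  qed
  ultimately show ?thesis
    unfolding Abr_coeff_def agree
    using sum_binomial_alternating_shift[of "nat (j h)" d]
    by (simp add: mult_ac d_def flip: sum_distrib_left)
qed

lemma Abr_coeff_move_target:
  assumes "0 < n" and "h \<noteq> k" and j: "j \<in> NN_tri n"
  shows "of_int (C h k) * Abr_coeff n A j (C - E_tri n h k + E_tri n k k)
    = of_int (A h k + 1) * (\<Sum>i\<in>{0..nat (j k)}. of_nat (nat (j k) choose i)
        * Abr_coeff n (A + E_tri n h k) (j - (\<lambda>q. int i * unitv n k q)) C)"
proof -
  define tk where "tk = (k - 1) mod int n + 1"
  define d where "d = (of_int (C tk tk) :: rat)"
  define Q where "Q = (\<Prod>q\<in>{1..int n} - {tk}. of_int (C q q) ^ nat (j q) :: rat)"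
  have tk: "tk \<in> {1..int n}" using mod_rep_mem[OF assms(1)] tk_def by simp
  have jk: "j k = j tk" and "0 \<le> j k"
    using j periodic_eq_mod_rep[of j n k] unfolding NN_tri_def tk_def by auto
  have agree: "agree_offdiag (C - E_tri n h k + E_tri n k k) A \<longleftrightarrow> agree_offdiag C (A + E_tri n h k)"
    unfolding agree_offdiag_move agree_offdiag_def by (auto simp: E_tri_offdiag_zero algebra_simps)
  have Ekk: "E_tri n k k q q = (if q = tk then 1 else 0)" if "q \<in> {1..int n}" for q
    using E_tri_diag_on_rep[OF that] tk_def by simp
  have "(\<Prod>q\<in>{1..int n} - {tk}. of_int ((C - E_tri n h k + E_tri n k k) q q) ^ nat (j q)) = Q"
    unfolding Q_def using \<open>h \<noteq> k\<close> by (intro prod.cong) (auto simp: Ekk E_tri_diag_zero)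
  then have "diag_pow n (C - E_tri n h k + E_tri n k k) j = (d + 1) ^ nat (j k) * Q"
    using diag_pow_split[OF tk] \<open>h \<noteq> k\<close> tk jk by (simp add: d_def Ekk E_tri_diag_zero)
  moreover have "diag_pow n C (j - (\<lambda>q. int i * unitv n k q)) = d ^ (nat (j k) - i) * Q" for i
  proof -
    have "j - (\<lambda>q. int i * unitv n k q) = (\<lambda>q. j q + (- int i) * unitv n k q)" by (simp add: fun_eq_iff)
    moreover have "nat (j tk + - int i) = nat (j k) - i" using jk by auto
    ultimately show ?thesis
      using diag_pow_shift_unitv[OF assms(1) tk_def, of C j "- int i"] by (simp add: d_def Q_def)
  qed
  moreover have "C h k = A h k + 1" if "agree_offdiag C (A + E_tri n h k)"
    using that \<open>h \<noteq> k\<close> unfolding agree_offdiag_def by (simp add: E_tri_eq)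
  ultimately show ?thesis
    unfolding Abr_coeff_def agree
    using sum_binomial_pow[of "nat (j k)" d]
    by (simp add: mult_ac flip: sum_distrib_left)
qed

lemma sum_Abr_coeff_row_move:
  assumes "0 < n" and h: "h \<in> {1..int n}" and hk: "h \<noteq> k"
    and C_fin: "finite {l. C h l \<noteq> 0}" and C_nonneg: "\<forall>l. l \<noteq> k \<longrightarrow> 0 \<le> C k l"
    and A_fin: "finite {l. A k l \<noteq> 0}" and j: "j \<in> NN_tri n"
  shows "(\<Sum>l\<in>{l. C h l \<noteq> 0}. of_int (C h l) * Abr_coeff n A j (C - E_tri n h l + E_tri n k l))
    = (\<Sum>i\<in>{i. i \<noteq> h \<and> i \<noteq> k \<and> 1 \<le> A k i}.
          of_int (A h i + 1) * Abr_coeff n (A + E_tri n h i - E_tri n k i) j C)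
    + (\<Sum>i\<in>{0..nat (j h)}. (-1) ^ i * of_nat (nat (j h) choose i)
          * Abr_coeff n (A - E_tri n k h) (j + (\<lambda>q. (1 - int i) * unitv n h q)) C)
    + of_int (A h k + 1) * (\<Sum>i\<in>{0..nat (j k)}. of_nat (nat (j k) choose i)
          * Abr_coeff n (A + E_tri n h k) (j - (\<lambda>q. int i * unitv n k q)) C)"
proof -
  define f where "f l = of_int (C h l) * Abr_coeff n A j (C - E_tri n h l + E_tri n k l)" for l
  define g where "g i = of_int (A h i + 1) * Abr_coeff n (A + E_tri n h i - E_tri n k i) j C" for i
  define I where "I = {i. i \<noteq> h \<and> i \<noteq> k \<and> 1 \<le> A k i}"
  define V where "V = ({l. C h l \<noteq> 0} \<union> I) - {h, k}"
  have "finite I" unfolding I_def by (rule finite_subset[OF _ A_fin]) auto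
  then have "finite V" using C_fin unfolding V_def by simp
  have f_off: "f l = (if l \<in> I then g l else 0)" if "l \<noteq> h" "l \<noteq> k" for l
  proof (cases "agree_offdiag C (A + E_tri n h l - E_tri n k l)")
    case True
    then have "C h l = A h l + 1" "C k l = A k l - 1"
      using that hk unfolding agree_offdiag_def by (auto simp: E_tri_eq)
    then show ?thesis
      using that C_nonneg unfolding f_def g_def I_def Abr_coeff_move_offdiag[OF that] by force
  next
    case False
    then show ?thesis unfolding f_def g_def Abr_coeff_move_offdiag[OF that] by (simp add: Abr_coeff_def)
  qed
  have "(\<Sum>l\<in>{l. C h l \<noteq> 0}. f l) = (\<Sum>l\<in>insert h (insert k V). f l)"
    by (rule sum.mono_neutral_left) (auto simp: \<open>finite V\<close> \<open>finite I\<close> C_fin V_def f_def)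
  also have "\<dots> = f h + f k + (\<Sum>l\<in>V. if l \<in> I then g l else 0)"
    using \<open>finite V\<close> hk f_off by (simp add: V_def)
  also have "(\<Sum>l\<in>V. if l \<in> I then g l else 0) = (\<Sum>i\<in>I. g i)"
  proof -
    have "V \<inter> I = I" unfolding V_def I_def by auto
    then show ?thesis by (simp add: sum.inter_restrict[OF \<open>finite V\<close>, symmetric])
  qed
  finally show ?thesis
    using Abr_coeff_move_source[OF assms(1) h hk, of j C A] Abr_coeff_move_target[OF assms(1) hk j, of C A] j
    unfolding f_def g_def I_def NN_tri_def by (simp add: add_ac)
qed

lemma sprod_Abr_E:
  assumes "0 < n" and h: "h \<in> {1..int n}" and hk: "h \<noteq> k" and A: "A \<in> Theta_int n"
    and j: "j \<in> NN_tri n"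
  shows "sprod r (Abr n r (E_tri n h k) 0) (Abr n r A j) =
     (\<Sum>i\<in>{i. i \<noteq> h \<and> i \<noteq> k \<and> 1 \<le> A k i}.
        ssc (of_int (A h i + 1)) (Abr n r (A + E_tri n h i - E_tri n k i) j))
   + (\<Sum>i\<in>{0..nat (j h)}. ssc ((-1) ^ i * of_nat (nat (j h) choose i))
        (Abr n r (A - E_tri n k h) (j + (\<lambda>q. (1 - int i) * unitv n h q))))
   + ssc (of_int (A h k + 1)) (\<Sum>i\<in>{0..nat (j k)}. ssc (of_nat (nat (j k) choose i))
        (Abr n r (A + E_tri n h k) (j - (\<lambda>q. int i * unitv n k q))))"
    (is "?lhs = ?rhs")
proof (intro ext)
  fix x y :: "int list"
  let ?len = "length x = r \<and> length y = r"
  have Adiag: "\<forall>a. A a a = 0" and A_fin: "finite {l. A k l \<noteq> 0}"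
    using A unfolding Theta_int_def by auto
  have Abr_eq: "Abr n r B j' x y = (if ?len then Abr_coeff n B j' (Mmat_int n x y) else 0)"
    if "\<forall>a. B a a = 0" for B j'
    using Abr_apply[of n B, OF assms(1) that] .
  have rhs: "?rhs x y = (\<Sum>i\<in>{i. i \<noteq> h \<and> i \<noteq> k \<and> 1 \<le> A k i}.
        of_int (A h i + 1) * Abr n r (A + E_tri n h i - E_tri n k i) j x y)
   + (\<Sum>i\<in>{0..nat (j h)}. (-1) ^ i * of_nat (nat (j h) choose i)
        * Abr n r (A - E_tri n k h) (j + (\<lambda>q. (1 - int i) * unitv n h q)) x y)
   + of_int (A h k + 1) * (\<Sum>i\<in>{0..nat (j k)}. of_nat (nat (j k) choose i)
        * Abr n r (A + E_tri n h k) (j - (\<lambda>q. int i * unitv n k q)) x y)"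
    by (simp add: sum_fun_apply ssc_def sum_distrib_left)
  show "?lhs x y = ?rhs x y"
  proof (cases ?len)
    case True
    have "\<forall>l. l \<noteq> k \<longrightarrow> 0 \<le> Mmat_int n x y k l" "finite {l. Mmat_int n x y h l \<noteq> 0}"
      using finite_Mmat_support[of n x y h] by (simp_all add: Mmat_int_def)
    from sum_Abr_coeff_row_move[of n h k "Mmat_int n x y" A, OF assms(1) h hk this(2,1) A_fin j]
    show ?thesis
      unfolding rhs sprod_Abr_E_apply[OF assms(1) hk A True[THEN conjunct1] True[THEN conjunct2]]
      using True hk by (simp add: Abr_eq Adiag E_tri_diag_zero cong: sum.cong_simp)
  next
    case False
    then show ?thesis
      unfolding rhs using sprod_Abr_outside[of n "E_tri n h k" A, OF assms(1) _ Adiag False] hk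
      by (simp add: Abr_eq Adiag if_not_P[OF False] E_tri_diag_zero cong: sum.cong_simp)
  qed
qed

lemma sprod_Abr_E_periodic:
  assumes "0 < n" and h: "h \<in> {1..int n}" and "m \<noteq> 0" and A: "A \<in> Theta_int n"
    and j: "j \<in> NN_tri n"
  shows "sprod r (Abr n r (E_tri n h (h + m * int n)) 0) (Abr n r A j)
    = (\<Sum>s\<in>{s. s \<notin> {h, h - m * int n} \<and> 1 \<le> A h s}.
         ssc (of_int (A h (s + m * int n) + 1)) (Abr n r (A + E_tri n h (s + m * int n) - E_tri n h s) j))
    + (\<Sum>u\<in>{0..nat (j h)}. ssc (of_int (A h (h + m * int n) + 1) * of_nat (nat (j h) choose u))
         (Abr n r (A + E_tri n h (h + m * int n)) (j - (\<lambda>k. int u * unitv n h k))))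
    + (\<Sum>u\<in>{0..nat (j h)}. ssc ((-1) ^ u * of_nat (nat (j h) choose u))
         (Abr n r (A - E_tri n h (h - m * int n)) (j + (\<lambda>k. (1 - int u) * unitv n h k))))"
proof -
  define k where "k = h + m * int n"
  have hk: "h \<noteq> k" using \<open>m \<noteq> 0\<close> assms(1) unfolding k_def by simp
  have A_shift: "A k (s + m * int n) = A h s" for s
    using A periodic_mat_shift[of n A h m s] unfolding Theta_int_def k_def by simp
  have "(\<Sum>i\<in>{i. i \<noteq> h \<and> i \<noteq> k \<and> 1 \<le> A k i}.
          ssc (of_int (A h i + 1)) (Abr n r (A + E_tri n h i - E_tri n k i) j))
      = (\<Sum>s\<in>{s. s \<notin> {h, h - m * int n} \<and> 1 \<le> A h s}.
          ssc (of_int (A h (s + m * int n) + 1)) (Abr n r (A + E_tri n h (s + m * int n) - E_tri n h s) j))"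
  proof (rule sum.reindex_cong[of "\<lambda>s. s + m * int n"])
    show "{i. i \<noteq> h \<and> i \<noteq> k \<and> 1 \<le> A k i} = (\<lambda>s. s + m * int n) ` {s. s \<notin> {h, h - m * int n} \<and> 1 \<le> A h s}"
    proof (intro set_eqI iffI)
      fix i assume "i \<in> {i. i \<noteq> h \<and> i \<noteq> k \<and> 1 \<le> A k i}"
      then show "i \<in> (\<lambda>s. s + m * int n) ` {s. s \<notin> {h, h - m * int n} \<and> 1 \<le> A h s}"
        using A_shift[of "i - m * int n"] unfolding k_def by (intro image_eqI[of _ _ "i - m * int n"]) auto
    qed (use A_shift k_def in auto)
  qed (simp_all add: inj_on_def k_def E_tri_shift[of n h m s for s, simplified])
  moreover have "E_tri n k h = E_tri n h (h - m * int n)"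
    using E_tri_shift[of n h m "h - m * int n"] unfolding k_def by simp
  moreover have "j k = j h" and "unitv n k = unitv n h"
    using j periodic_shift[of j n h m] unfolding NN_tri_def k_def unitv_def by auto
  ultimately show ?thesis
    using sprod_Abr_E[OF assms(1) h hk A j, of r] unfolding k_def
    by (simp add: ssc_sum ssc_ssc add_ac)
qed

theorem theorem6p2p2:
  fixes n r :: nat and h t :: int and j :: "int \<Rightarrow> int" and A :: smat
  assumes "2 \<le> n" and "1 \<le> h" and "h \<le> int n" and "1 \<le> t" and "t \<le> int n"
    and "j \<in> NN_tri n" and "A \<in> Theta_pm n"
  shows "(sprod r (Abr n r 0 (unitv n t)) (Abr n r A j)
           = Abr n r A (j + unitv n t) + ssc (of_int (\<Sum>s\<in>{s. A t s \<noteq> 0}. A t s)) (Abr n r A j))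
    \<and> (\<forall>\<epsilon>::int. \<epsilon> \<in> {1, -1} \<longrightarrow>
         sprod r (Abr n r (E_tri n h (h + \<epsilon>)) 0) (Abr n r A j)
         = (\<Sum>i\<in>{i. i \<noteq> h \<and> i \<noteq> h + \<epsilon> \<and> 1 \<le> A (h + \<epsilon>) i}.
               ssc (of_int (A h i + 1)) (Abr n r (A + E_tri n h i - E_tri n (h + \<epsilon>) i) j))
         + (\<Sum>i\<in>{0..nat (j h)}.
               ssc ((-1) ^ i * of_nat (nat (j h) choose i))
                   (Abr n r (A - E_tri n (h + \<epsilon>) h) (j + (\<lambda>k. (1 - int i) * unitv n h k))))
         + ssc (of_int (A h (h + \<epsilon>) + 1))
             (\<Sum>i\<in>{0..nat (j (h + \<epsilon>))}.
               ssc (of_nat (nat (j (h + \<epsilon>)) choose i))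
                   (Abr n r (A + E_tri n h (h + \<epsilon>)) (j - (\<lambda>k. int i * unitv n (h + \<epsilon>) k)))))
    \<and> (\<forall>m::int. m \<noteq> 0 \<longrightarrow>
         sprod r (Abr n r (E_tri n h (h + m * int n)) 0) (Abr n r A j)
         = (\<Sum>s\<in>{s. s \<notin> {h, h - m * int n} \<and> 1 \<le> A h s}.
               ssc (of_int (A h (s + m * int n) + 1))
                   (Abr n r (A + E_tri n h (s + m * int n) - E_tri n h s) j))
         + (\<Sum>u\<in>{0..nat (j h)}.
               ssc (of_int (A h (h + m * int n) + 1) * of_nat (nat (j h) choose u))
                   (Abr n r (A + E_tri n h (h + m * int n)) (j - (\<lambda>k. int u * unitv n h k))))
         + (\<Sum>u\<in>{0..nat (j h)}.
               ssc ((-1) ^ u * of_nat (nat (j h) choose u))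
                   (Abr n r (A - E_tri n h (h - m * int n)) (j + (\<lambda>k. (1 - int u) * unitv n h k)))))"
proof -
  have n: "0 < n" using assms(1) by simp
  have h: "h \<in> {1..int n}" and t: "t \<in> {1..int n}" using assms(2-5) by simp_all
  have A: "A \<in> Theta_int n" using assms(7) Theta_pm_subset_Theta_int by blast
  have "h \<noteq> h + \<epsilon>" if "\<epsilon> \<in> {1, -1}" for \<epsilon> :: int using that by auto
  then show ?thesis
    using sprod_Abr_zero_unitv[OF n t A assms(6)] sprod_Abr_E[OF n h _ A assms(6)]
      sprod_Abr_E_periodic[OF n h _ A assms(6)]
    by blast
qed

end
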